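(* Consider the two-agent series component maintenance game with prior probabilities $p_1,p_2\in(0,1)$ that components $1,2$ work. Then there exist repair costs $C_1,C_2$ for which the Price of Anarchy without subsidy satisfies $\mathrm{PoA}\ge \frac{2}{p_1+p_2}$. More generally, for the $n$-agent series component maintenance game with prior probabilities $p_1,\dots,p_n\in(0,1)$, there exist repair costs $C_1,\dots,C_n$ for which $\mathrm{PoA}\ge \tilde H/\tilde G^{\,n}$, where $\tilde H=\frac{n}{\sum_i 1/p_i}$ and $\tilde G=(\prod_i p_i)^{1/n}$ are the harmonic and geometric means of $p_1,\dots,p_n$.
   Context: Component maintenance game: agent $i\in[n]$ owns component $i$ with random binary state $x_i\in\{0,1\}$ ($1$ = working), the components being independent with $\Pr[x_i=1]=p_i$. Each agent chooses $s_i\in\{0,1\}$ ($1$ = repair, $0$ = do nothing); after the actions the component state is $x_i'=\max\{x_i,s_i\}$. The system state is $\phi(\bm{x}')$ for a fixed Boolean function $\phi$; in the series system $\phi(\bm{x})=x_1\wedge\dots\wedge x_n$. Agent $i$ has repair cost $C_i\in\mathbb{R}$ and expected cost $l_i(s)=C_is_i+1-\mathbb{E}[\phi(\bm{x}'(s))]$; the social cost is $\sum_i l_i(s)$ and $\mathsf{OPT}$ its minimum over joint actions. The Price of Anarchy without subsidy is $\mathrm{PoA}=\max_{s\in\mathcal{S}_{NE}}\mathrm{cost}(s)/\mathsf{OPT}$, where $\mathcal{S}_{NE}$ is the set of pure Nash equilibria. *)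

theory Defs
  imports Complex_Main
begin

text \<open>Agents are indexed 0..n-1. A (pure) joint action / a component state vector is a
  boolean vector nat \<Rightarrow> bool that is False outside {0..<n} (True = 1).\<close>

definition profiles :: "nat \<Rightarrow> (nat \<Rightarrow> bool) set" where
  "profiles n = {s. \<forall>i\<ge>n. \<not> s i}"

definition series :: "nat \<Rightarrow> (nat \<Rightarrow> bool) \<Rightarrow> bool" where
  "series n x \<longleftrightarrow> (\<forall>i<n. x i)"

definition state_prob :: "nat \<Rightarrow> (nat \<Rightarrow> real) \<Rightarrow> (nat \<Rightarrow> bool) \<Rightarrow> real" where
  "state_prob n p x = (\<Prod>i<n. if x i then p i else 1 - p i)"

definition exp_system :: "nat \<Rightarrow> (nat \<Rightarrow> real) \<Rightarrow> (nat \<Rightarrow> bool) \<Rightarrow> real" where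
  "exp_system n p s =
     (\<Sum>x\<in>profiles n. state_prob n p x * (if series n (\<lambda>i. x i \<or> s i) then 1 else 0))"

definition indiv_cost ::
  "nat \<Rightarrow> (nat \<Rightarrow> real) \<Rightarrow> (nat \<Rightarrow> real) \<Rightarrow> (nat \<Rightarrow> bool) \<Rightarrow> nat \<Rightarrow> real" where
  "indiv_cost n p C s i = (if s i then C i else 0) + 1 - exp_system n p s"

definition social_cost ::
  "nat \<Rightarrow> (nat \<Rightarrow> real) \<Rightarrow> (nat \<Rightarrow> real) \<Rightarrow> (nat \<Rightarrow> bool) \<Rightarrow> real" where
  "social_cost n p C s = (\<Sum>i<n. indiv_cost n p C s i)"

definition OPT :: "nat \<Rightarrow> (nat \<Rightarrow> real) \<Rightarrow> (nat \<Rightarrow> real) \<Rightarrow> real" where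
  "OPT n p C = Min (social_cost n p C ` profiles n)"

definition is_NE ::
  "nat \<Rightarrow> (nat \<Rightarrow> real) \<Rightarrow> (nat \<Rightarrow> real) \<Rightarrow> (nat \<Rightarrow> bool) \<Rightarrow> bool" where
  "is_NE n p C s \<longleftrightarrow> s \<in> profiles n \<and>
     (\<forall>i<n. \<forall>b. indiv_cost n p C s i \<le> indiv_cost n p C (s(i := b)) i)"

definition NE_set :: "nat \<Rightarrow> (nat \<Rightarrow> real) \<Rightarrow> (nat \<Rightarrow> real) \<Rightarrow> (nat \<Rightarrow> bool) set" where
  "NE_set n p C = {s. is_NE n p C s}"

definition PoA :: "nat \<Rightarrow> (nat \<Rightarrow> real) \<Rightarrow> (nat \<Rightarrow> real) \<Rightarrow> real" where
  "PoA n p C = Max ((\<lambda>s. social_cost n p C s / OPT n p C) ` NE_set n p C)"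

end

theory Submission
  imports Defs
begin

text \<open>With all priors in (0,1) and P the product of the priors, the expected system state is
  P if nobody repairs and P / p i if only agent i repairs. Choosing
  C i = P / p i - P makes every agent indifferent to a unilateral repair, so doing
  nothing is an equilibrium of social cost n (1 - P), whereas repairing everything costs
  \<Sum> C i = P (S - n) with S = \<Sum> 1 / p i. Since P S \<le> n, the ratio
  n (1 - P) / (P (S - n)) is at least (n / S) / P, and P is the n-th power of the
  geometric mean.\<close>

lemma profiles_Suc:
  "profiles (Suc n) = (\<lambda>x. x(n := False)) ` profiles n \<union> (\<lambda>x. x(n := True)) ` profiles n"
proof (intro equalityI subsetI)
  fix x assume x: "x \<in> profiles (Suc n)"
  then have "x(n := False) \<in> profiles n" by (auto simp: profiles_def)
  then have "x \<in> (\<lambda>y. y(n := x n)) ` profiles n"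
    by (rule image_eqI[rotated]) simp
  then show "x \<in> (\<lambda>x. x(n := False)) ` profiles n \<union> (\<lambda>x. x(n := True)) ` profiles n"
    by (cases "x n") simp_all
qed (auto simp: profiles_def)

lemma profiles_0: "profiles 0 = {\<lambda>_. False}"
  by (auto simp: profiles_def)

lemma finite_profiles: "finite (profiles n)"
  by (induction n) (simp_all add: profiles_0 profiles_Suc)

lemma sum_profiles_prod:
  fixes g :: "nat \<Rightarrow> bool \<Rightarrow> 'a :: comm_semiring_1"
  shows "(\<Sum>x\<in>profiles n. \<Prod>i<n. g i (x i)) = (\<Prod>i<n. g i True + g i False)"
proof (induction n)
  case 0
  show ?case by (simp add: profiles_0)
next
  case (Suc n)
  have sum_extension: "(\<Sum>x\<in>(\<lambda>x. x(n := b)) ` profiles n. \<Prod>i<Suc n. g i (x i))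
      = (\<Sum>x\<in>profiles n. \<Prod>i<n. g i (x i)) * g n b" for b
  proof -
    have "inj_on (\<lambda>x. x(n := b)) (profiles n)"
      by (auto simp: inj_on_def profiles_def fun_eq_iff)
    then have "(\<Sum>x\<in>(\<lambda>x. x(n := b)) ` profiles n. \<Prod>i<Suc n. g i (x i))
        = (\<Sum>x\<in>profiles n. (\<Prod>i<n. g i (x i)) * g n b)"
      by (simp add: sum.reindex lessThan_Suc mult.commute)
    then show ?thesis by (simp add: sum_distrib_right)
  qed
  have "(\<lambda>x. x(n := False)) ` profiles n \<inter> (\<lambda>x. x(n := True)) ` profiles n = {}"
    by (auto dest!: fun_cong[where x = n])
  then have "(\<Sum>x\<in>profiles (Suc n). \<Prod>i<Suc n. g i (x i))
      = (\<Sum>x\<in>(\<lambda>x. x(n := False)) ` profiles n. \<Prod>i<Suc n. g i (x i))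
      + (\<Sum>x\<in>(\<lambda>x. x(n := True)) ` profiles n. \<Prod>i<Suc n. g i (x i))"
    unfolding profiles_Suc by (intro sum.union_disjoint) (auto simp: finite_profiles)
  also have "\<dots> = (\<Prod>i<n. g i True + g i False) * (g n True + g n False)"
    unfolding sum_extension Suc.IH by (simp add: distrib_left add.commute)
  finally show ?case by (simp add: lessThan_Suc mult.commute)
qed

lemma prod_indicator_eq:
  "(\<Prod>i<(n::nat). if Q i then 1 else 0 :: 'a :: comm_semiring_1) = (if \<forall>i<n. Q i then 1 else 0)"
  by (induction n) (auto simp: less_Suc_eq)

lemma prod_le_factor:
  fixes f :: "'b \<Rightarrow> 'a :: linordered_semidom"
  assumes "finite A" and "\<forall>i\<in>A. 0 \<le> f i \<and> f i \<le> 1" and "j \<in> A"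
  shows "prod f A \<le> f j"
proof -
  have "prod f A = f j * prod f (A - {j})"
    using assms(1,3) by (simp add: prod.remove)
  also have "\<dots> \<le> f j * 1"
    using assms by (intro mult_left_mono prod_le_1) auto
  finally show ?thesis by simp
qed

lemma prod_mult_sum_inverse_le:
  fixes p :: "nat \<Rightarrow> real"
  assumes "\<forall>i<n. 0 < p i \<and> p i \<le> 1"
  shows "(\<Prod>i<n. p i) * (\<Sum>i<n. 1 / p i) \<le> n"
proof -
  have "(\<Prod>j<n. p j) \<le> p i" if "i < n" for i
    using assms that by (intro prod_le_factor) auto
  then have "(\<Sum>i<n. (\<Prod>j<n. p j) / p i) \<le> (\<Sum>i<n. 1)"
    using assms by (intro sum_mono) (simp add: divide_le_eq)
  then show ?thesis
    by (simp add: sum_distrib_left)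
qed

lemma anarchy_ratio_ge:
  fixes n P S :: real
  assumes "0 \<le> n" and "0 < P" and "n * P < P * S" and "P * S \<le> n"
  shows "n / S / P \<le> n * (1 - P) / (P * S - n * P)"
proof -
  have "0 < S"
    using assms(1-3) by (simp add: zero_less_mult_iff)
  have "n * P * (S - n) \<le> n * P * (S - P * S)"
    using assms by (intro mult_left_mono) auto
  then have "n * (P * S - n * P) \<le> n * (1 - P) * (S * P)"
    by (simp add: algebra_simps)
  then show ?thesis
    using assms(2,3) \<open>0 < S\<close> by (simp add: divide_simps mult.commute)
qed

lemma exp_system_eq_prod: "exp_system n p s = (\<Prod>i<n. if s i then 1 else p i)"
proof -
  have "exp_system n p s = (\<Sum>x\<in>profiles n. \<Prod>i<n.
      (if x i then p i else 1 - p i) * (if x i \<or> s i then 1 else 0))"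
    unfolding exp_system_def state_prob_def series_def
    by (intro sum.cong refl) (simp add: prod.distrib prod_indicator_eq)
  also have "\<dots> = (\<Prod>i<n. if s i then 1 else p i)"
    by (subst sum_profiles_prod) (intro prod.cong refl, auto)
  finally show ?thesis .
qed

lemma exp_system_single_repair:
  assumes "i < n" and "p i \<noteq> 0"
  shows "exp_system n p ((\<lambda>_. False)(i := True)) = (\<Prod>j<n. p j) / p i"
proof -
  have "exp_system n p ((\<lambda>_. False)(i := True)) = (\<Prod>j\<in>{..<n} - {i}. p j)"
    using assms(1) by (simp add: exp_system_eq_prod prod.If_cases Int_absorb1 Diff_eq)
  also have "\<dots> = (\<Prod>j<n. p j) / p i"
    using assms by (simp add: prod.remove)
  finally show ?thesis .
qed

lemma social_cost_eq:
  "social_cost n p C s = (\<Sum>i<n. if s i then C i else 0) + n * (1 - exp_system n p s)"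
  unfolding social_cost_def indiv_cost_def
  by (simp add: sum.distrib sum_subtractf right_diff_distrib)

lemma social_cost_no_repair: "social_cost n p C (\<lambda>_. False) = n * (1 - (\<Prod>i<n. p i))"
  by (simp add: social_cost_eq exp_system_eq_prod)

lemma social_cost_all_repair: "social_cost n p C (\<lambda>i. i < n) = (\<Sum>i<n. C i)"
  by (simp add: social_cost_eq exp_system_eq_prod)

lemma OPT_le_social_cost: "s \<in> profiles n \<Longrightarrow> OPT n p C \<le> social_cost n p C s"
  unfolding OPT_def by (simp add: finite_profiles)

lemma OPT_le_sum_costs: "OPT n p C \<le> (\<Sum>i<n. C i)"
  using OPT_le_social_cost[of "\<lambda>i. i < n" n p C]
  by (simp add: social_cost_all_repair profiles_def)

lemma OPT_pos:
  assumes "n \<ge> 1" and "\<forall>i<n. 0 < p i \<and> p i < 1" and "\<forall>i<n. 0 < C i"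
  shows "0 < OPT n p C"
proof -
  have "0 < social_cost n p C s" if "s \<in> profiles n" for s
  proof (cases "\<forall>i<n. s i")
    case True
    then have "s = (\<lambda>i. i < n)"
      using that unfolding profiles_def fun_eq_iff by (metis mem_Collect_eq not_le)
    then have "social_cost n p C s = (\<Sum>i<n. C i)"
      by (simp add: social_cost_all_repair)
    also have "\<dots> > 0"
      using assms by (intro sum_pos) (auto simp: lessThan_empty_iff)
    finally show ?thesis .
  next
    case False
    then obtain j where "j < n" "\<not> s j" by auto
    then have "exp_system n p s \<le> p j"
      using prod_le_factor[of "{..<n}" "\<lambda>i. if s i then 1 else p i" j] assms(2)
      by (auto simp: exp_system_eq_prod less_imp_le)
    then have "exp_system n p s < 1"
      using assms(2) \<open>j < n\<close> by force
    moreover have "0 \<le> (\<Sum>i<n. if s i then C i else 0)"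
      using assms(3) by (intro sum_nonneg) (auto simp: less_imp_le)
    ultimately show ?thesis
      using assms(1) by (simp add: social_cost_eq add_nonneg_pos)
  qed
  moreover have "(\<lambda>_. False) \<in> profiles n"
    by (simp add: profiles_def)
  ultimately show ?thesis
    unfolding OPT_def by (subst Min_gr_iff) (auto simp: finite_profiles)
qed

lemma PoA_ge_social_cost_ratio:
  assumes "s \<in> NE_set n p C"
  shows "social_cost n p C s / OPT n p C \<le> PoA n p C"
proof -
  have "finite (NE_set n p C)"
    by (rule finite_subset[OF _ finite_profiles]) (auto simp: NE_set_def is_NE_def)
  then show ?thesis
    unfolding PoA_def using assms by (intro Max_ge) auto
qed

lemma PoA_ge_no_repair_ratio:
  assumes "(\<lambda>_. False) \<in> NE_set n p C" and "0 < OPT n p C" and "(\<Prod>i<n. p i) \<le> 1"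
  shows "n * (1 - (\<Prod>i<n. p i)) / (\<Sum>i<n. C i) \<le> PoA n p C"
proof -
  have "0 < (\<Sum>i<n. C i)"
    using assms(2) OPT_le_sum_costs[of n p C] by linarith
  then have "n * (1 - (\<Prod>i<n. p i)) / (\<Sum>i<n. C i) \<le> n * (1 - (\<Prod>i<n. p i)) / OPT n p C"
    using assms(2,3) OPT_le_sum_costs by (intro divide_left_mono) auto
  also have "\<dots> \<le> PoA n p C"
    using PoA_ge_social_cost_ratio[OF assms(1)] by (simp add: social_cost_no_repair)
  finally show ?thesis .
qed

definition indifference_cost :: "nat \<Rightarrow> (nat \<Rightarrow> real) \<Rightarrow> nat \<Rightarrow> real" where
  "indifference_cost n p i = (\<Prod>j<n. p j) / p i - (\<Prod>j<n. p j)"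

lemma indifference_cost_pos:
  assumes "\<forall>i<n. 0 < p i \<and> p i < 1" and "i < n"
  shows "0 < indifference_cost n p i"
proof -
  have "0 < (\<Prod>j<n. p j)"
    using assms(1) by (intro prod_pos) auto
  then show ?thesis
    using assms by (simp add: indifference_cost_def less_divide_eq)
qed

lemma sum_indifference_cost:
  "(\<Sum>i<n. indifference_cost n p i) = (\<Prod>i<n. p i) * (\<Sum>i<n. 1 / p i) - n * (\<Prod>i<n. p i)"
  by (simp add: indifference_cost_def sum_subtractf sum_distrib_left)

lemma no_repair_NE:
  assumes "\<forall>i<n. 0 < p i" and "\<forall>i<n. indifference_cost n p i \<le> C i"
  shows "(\<lambda>_. False) \<in> NE_set n p C"
  unfolding NE_set_def is_NE_def
proof (intro CollectI conjI allI impI)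
  fix i b assume "i < n"
  then have "exp_system n p ((\<lambda>_. False)(i := True)) = (\<Prod>j<n. p j) / p i"
    using assms(1) by (intro exp_system_single_repair) auto
  then show "indiv_cost n p C (\<lambda>_. False) i \<le> indiv_cost n p C ((\<lambda>_. False)(i := b)) i"
    using assms(2) \<open>i < n\<close>
    by (cases b) (auto simp: indiv_cost_def exp_system_eq_prod indifference_cost_def)
qed (simp add: profiles_def)

theorem proposition2:
  fixes n :: nat and p :: "nat \<Rightarrow> real"
  assumes "n \<ge> 1"
    and "\<forall>i<n. 0 < p i \<and> p i < 1"
  shows "\<exists>C :: nat \<Rightarrow> real.
           NE_set n p C \<noteq> {} \<and> OPT n p C > 0 \<and>
           PoA n p C \<ge> (real n / (\<Sum>i<n. 1 / p i)) / (root n (\<Prod>i<n. p i)) ^ n"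
proof (intro exI conjI)
  define P where "P = (\<Prod>i<n. p i)"
  define C where "C = indifference_cost n p"
  have C_pos: "\<forall>i<n. 0 < C i"
    using assms(2) by (simp add: C_def indifference_cost_pos)
  have NE: "(\<lambda>_. False) \<in> NE_set n p C"
    using assms(2) by (intro no_repair_NE) (auto simp: C_def)
  then show "NE_set n p C \<noteq> {}" by blast
  show OPT: "0 < OPT n p C"
    using assms C_pos by (intro OPT_pos)
  have "0 < P" "P \<le> 1"
    unfolding P_def using assms(2) by (auto intro: prod_pos prod_le_1 less_imp_le)
  moreover have "P * (\<Sum>i<n. 1 / p i) \<le> n"
    unfolding P_def using assms(2) by (intro prod_mult_sum_inverse_le) (auto simp: less_imp_le)
  moreover have "0 < (\<Sum>i<n. C i)"
    using C_pos assms(1) by (intro sum_pos) (auto simp: lessThan_empty_iff)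
  ultimately have "(real n / (\<Sum>i<n. 1 / p i)) / P \<le> n * (1 - P) / (\<Sum>i<n. C i)"
    unfolding C_def sum_indifference_cost P_def[symmetric] by (intro anarchy_ratio_ge) auto
  also have "\<dots> \<le> PoA n p C"
    using NE OPT \<open>P \<le> 1\<close> unfolding P_def by (rule PoA_ge_no_repair_ratio)
  finally show "(real n / (\<Sum>i<n. 1 / p i)) / (root n (\<Prod>i<n. p i)) ^ n \<le> PoA n p C"
    using \<open>0 < P\<close> assms(1) by (simp add: P_def real_root_pow_pos)
qed

end
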